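(* Let $\mathcal P\subseteq 2^{[n]}$ be a nonempty intersection-closed family. Let $\mathcal F(\Delta_{\mathcal P})$ be the labeled cellular chain complex of free $S$-modules supported on the order complex $\Delta_{\mathcal P}$, where each vertex $A\in\mathcal P$ is labeled by $m(A,A)$, each face is labeled by the lcm of the labels of its vertices, and the empty face is labeled by $1$. Explicitly, $F_i=\bigoplus_{\sigma} S\,e_\sigma$ over $i$-faces $\sigma$ of $\Delta_{\mathcal P}$ (for $i\ge -1$, with $F_{-1}=S$), $e_\sigma$ of multidegree $m_\sigma$ (the label of $\sigma$), and for $\sigma=\{C_0<\dots<C_i\}$, $\partial(e_\sigma)=\sum_{j=0}^{i}(-1)^j\frac{m_\sigma}{m_{\sigma\setminus\{C_j\}}}e_{\sigma\setminus\{C_j\}}$. Then $\mathcal F(\Delta_{\mathcal P})$ is acyclic, and hence is a (multigraded) $S$-free resolution of $S/I^\star_{\mathtt C(\mathcal P)}$.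
   Context: For $n\in\mathbb N$ let $[n]=\{0,\dots,n-1\}$. Fix a field $\Bbbk$ and let $S=\Bbbk[x_{(i,b)}: i\in[n], b\in\{0,1\}]$. For a family $\mathcal P\subseteq 2^{[n]}$ (partially ordered by inclusion), $\mathtt C(\mathcal P)=\{\mathbf 1_A: A\in\mathcal P\}$ is the associated class of indicator functions $[n]\to\{0,1\}$. $\mathcal P$ is intersection-closed if $A,B\in\mathcal P\Rightarrow A\cap B\in\mathcal P$. For a function class $\mathtt C$, $I^\star_{\mathtt C}=\langle\prod_{i\in[n]}x_{(i,1-f(i))}: f\in\mathtt C\rangle\subseteq S$. For $A\subseteq B\subseteq[n]$, $m(A,B):=\prod_{i\in A}x_{(i,0)}\prod_{i\notin B}x_{(i,1)}\prod_{i\in B\setminus A}x_{(i,0)}x_{(i,1)}$; in particular $I^\star_{\mathtt C(\mathcal P)}=\langle m(A,A):A\in\mathcal P\rangle$. The order complex $\Delta_{\mathcal P}$ is the simplicial complex whose $i$-faces are the chains $C_0<C_1<\dots<C_i$ in $\mathcal P$. *)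

theory Defs
  imports "HOL-Library.Poly_Mapping"
begin

text \<open>The polynomial ring S = k[x_(i,b)] is modelled as finitely supported maps from
  monomials (exponent vectors, finitely supported maps (nat \<times> bool) \<Rightarrow> nat) to the field k.
  Variable x_(i,0) is (i, False), x_(i,1) is (i, True).\<close>

type_synonym expo = "(nat \<times> bool) \<Rightarrow>\<^sub>0 nat"
type_synonym 'k polyS = "expo \<Rightarrow>\<^sub>0 'k"

definition mono :: "expo \<Rightarrow> 'k::field polyS" where
  "mono e = Poly_Mapping.single e 1"

text \<open>Exponent vector of m(A,B) for A \<subseteq> B \<subseteq> [n]:
  x_(i,0) occurs iff i \<in> B, x_(i,1) occurs iff i \<notin> A.\<close>
definition mexp :: "nat \<Rightarrow> nat set \<Rightarrow> nat set \<Rightarrow> expo" where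
  "mexp n A B = (\<Sum>i<n. (if i \<in> B then Poly_Mapping.single (i, False) 1 else 0)
                      + (if i \<notin> A then Poly_Mapping.single (i, True) 1 else 0))"

definition mm :: "nat \<Rightarrow> nat set \<Rightarrow> nat set \<Rightarrow> 'k::field polyS" where
  "mm n A B = mono (mexp n A B)"

text \<open>lcm of monomials = pointwise max of exponent vectors.\<close>
lift_definition pmax :: "expo \<Rightarrow> expo \<Rightarrow> expo" is "\<lambda>f g x. max (f x) (g x)"
proof -
  fix f g :: "nat \<times> bool \<Rightarrow> nat"
  assume "finite {x. f x \<noteq> 0}" "finite {x. g x \<noteq> 0}"
  then have "finite ({x. f x \<noteq> 0} \<union> {x. g x \<noteq> 0})" by simp
  then show "finite {x. max (f x) (g x) \<noteq> 0}" by (rule finite_subset[rotated]) auto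
qed

text \<open>A face of the order complex with d vertices: a strictly increasing chain
  C_0 < ... < C_(d-1) in P, represented as a list. The empty list is the empty face.\<close>
definition faces :: "nat set set \<Rightarrow> nat \<Rightarrow> nat set list set" where
  "faces P d = {\<sigma>. length \<sigma> = d \<and> set \<sigma> \<subseteq> P \<and> sorted_wrt (\<subset>) \<sigma>}"

definition face_label :: "nat \<Rightarrow> nat set list \<Rightarrow> expo" where
  "face_label n \<sigma> = fold (\<lambda>A e. pmax (mexp n A A) e) \<sigma> 0"

definition remove_nth :: "nat \<Rightarrow> 'a list \<Rightarrow> 'a list" where
  "remove_nth j xs = take j xs @ drop (Suc j) xs"

text \<open>Elements of the free module F with basis the faces with d vertices
  (homological index d-1), as coefficient functions supported on those faces.\<close>
definition chains :: "nat set set \<Rightarrow> nat \<Rightarrow> (nat set list \<Rightarrow> 'k::field polyS) set" where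
  "chains P d = {c. \<forall>\<sigma>. \<sigma> \<notin> faces P d \<longrightarrow> c \<sigma> = 0}"

definition bdry :: "nat set set \<Rightarrow> nat \<Rightarrow> nat \<Rightarrow> (nat set list \<Rightarrow> 'k::field polyS)
    \<Rightarrow> (nat set list \<Rightarrow> 'k polyS)" where
  "bdry P n d c = (\<lambda>\<tau>. if \<tau> \<in> faces P d then
      (\<Sum>\<sigma>\<in>faces P (Suc d). \<Sum>j<Suc d.
         if remove_nth j \<sigma> = \<tau>
         then (-1) ^ j * mono (face_label n \<sigma> - face_label n \<tau>) * c \<sigma> else 0)
    else 0)"

text \<open>The ideal I*_{C(P)} generated by the m(A,A), A \<in> P (P finite).\<close>
definition Istar :: "nat \<Rightarrow> nat set set \<Rightarrow> 'k::field polyS set" where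
  "Istar n P = {\<Sum>A\<in>P. r A * mm n A A | r. True}"

end

theory Submission
  imports Defs
begin

text \<open>Everything is multigraded, so one multidegree \<open>\<alpha>\<close> can be treated at a time. The generator
  \<open>e\<^sub>\<sigma>\<close> contributes to degree \<open>\<alpha>\<close> iff \<open>m\<^sub>\<sigma>\<close> divides \<open>x\<^sup>\<alpha>\<close>, i.e. iff all vertices of \<open>\<sigma>\<close> lie in
  \<open>Q\<^sub>\<alpha> = {A \<in> P. m(A,A) divides x\<^sup>\<alpha>}\<close>; so the degree-\<open>\<alpha>\<close> strand is the augmented simplicial chain
  complex of the order complex of \<open>Q\<^sub>\<alpha>\<close> over \<open>k\<close>. As \<open>m(A \<inter> B, A \<inter> B)\<close> divides
  \<open>lcm(m(A,A), m(B,B))\<close>, each \<open>Q\<^sub>\<alpha>\<close> is intersection-closed, hence empty or has a least element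
  \<open>\<Inter>Q\<^sub>\<alpha>\<close>, over which the order complex is a cone and thus acyclic. The cone contractions of all
  strands together lift a cycle to a preimage. In the lowest degree \<open>e\<^bsub>{A}\<^esub> \<mapsto> m(A,A)\<close>, so the image
  is \<open>I\<^sup>\<star>\<close>.\<close>

text \<open>Divisibility of monomials; the order that the library puts on \<open>poly_mapping\<close> is
  lexicographic, not this one.\<close>
definition expo_le :: "('a \<Rightarrow>\<^sub>0 nat) \<Rightarrow> ('a \<Rightarrow>\<^sub>0 nat) \<Rightarrow> bool" where
  "expo_le a b \<longleftrightarrow> (\<forall>v. Poly_Mapping.lookup a v \<le> Poly_Mapping.lookup b v)"

lemma expo_le_refl [simp]: "expo_le a a"
  by (simp add: expo_le_def)

lemma expo_le_add_left [simp]: "expo_le a (u + a)"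
  by (simp add: expo_le_def lookup_add)

lemma expo_le_diff_add: "expo_le a b \<Longrightarrow> b - a + a = b"
  by (auto simp: expo_le_def poly_mapping_eq_iff fun_eq_iff lookup_add lookup_minus)

lemma mono_mult_mono: "mono a * mono b = (mono (a + b) :: 'k::field polyS)"
  by (simp add: mono_def mult_single)

lemma lookup_mono_mult:
  "Poly_Mapping.lookup (mono e * (p::'k::field polyS)) v
     = (if expo_le e v then Poly_Mapping.lookup p (v - e) else 0)"
proof -
  have "Poly_Mapping.lookup (mono e * p) v
      = (\<Sum>l. ((1::'k) when e = l) * (\<Sum>q. Poly_Mapping.lookup p q when v = l + q))"
    unfolding mono_def lookup_mult lookup_single by simp
  also have "\<dots> = (\<Sum>l. (\<Sum>q. Poly_Mapping.lookup p q when v = l + q) when e = l)"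
    by (rule Sum_any.cong) (simp add: when_def)
  also have "\<dots> = (\<Sum>q. Poly_Mapping.lookup p q when v = e + q)"
    by simp
  also have "\<dots> = (if expo_le e v then Poly_Mapping.lookup p (v - e) else 0)"
  proof (cases "expo_le e v")
    case True
    then have "v = e + q \<longleftrightarrow> q = v - e" for q
      by (metis add.commute add_diff_cancel_right' expo_le_diff_add)
    then show ?thesis using True by simp
  next
    case False
    then have "v \<noteq> e + q" for q
      by (metis add.commute expo_le_add_left)
    then show ?thesis using False by simp
  qed
  finally show ?thesis .
qed

lemma lookup_neg_one_power_mult:
  "Poly_Mapping.lookup ((-1) ^ j * (p::'k::comm_ring_1 polyS)) v = (-1) ^ j * Poly_Mapping.lookup p v"
  by (induction j) auto

lemma lookup_fold_pmax_le:
  "Poly_Mapping.lookup (fold (\<lambda>A e. pmax (g A) e) \<sigma> e0) v \<le> m \<longleftrightarrow>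
     Poly_Mapping.lookup e0 v \<le> m \<and> (\<forall>A\<in>set \<sigma>. Poly_Mapping.lookup (g A) v \<le> m)"
  by (induction \<sigma> arbitrary: e0) (auto simp: pmax.rep_eq)

lemma expo_le_face_label_iff:
  "expo_le (face_label n \<sigma>) \<alpha> \<longleftrightarrow> (\<forall>A\<in>set \<sigma>. expo_le (mexp n A A) \<alpha>)"
  unfolding expo_le_def face_label_def lookup_fold_pmax_le by auto

lemma face_label_mono: "set \<tau> \<subseteq> set \<sigma> \<Longrightarrow> expo_le (face_label n \<tau>) (face_label n \<sigma>)"
  using expo_le_face_label_iff[of n \<sigma> "face_label n \<sigma>"] by (auto simp: expo_le_face_label_iff)

lemma face_label_Nil [simp]: "face_label n [] = 0"
  by (simp add: face_label_def)

lemma face_label_single [simp]: "face_label n [A] = mexp n A A"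
  by (simp add: face_label_def poly_mapping_eq_iff fun_eq_iff pmax.rep_eq)

lemma lookup_mexp_diag:
  "Poly_Mapping.lookup (mexp n A A) (i, b) = (if i < n \<and> (b \<longleftrightarrow> i \<notin> A) then 1 else 0)"
proof -
  have lookup_summand: "Poly_Mapping.lookup ((if k \<in> A then Poly_Mapping.single (k, False) 1 else 0)
      + (if k \<notin> A then Poly_Mapping.single (k, True) 1 else 0)) (i, b)
      = (if k = i \<and> (b \<longleftrightarrow> i \<notin> A) then 1 else 0)" for k
    by (auto simp: lookup_add lookup_single when_def)
  show ?thesis unfolding mexp_def lookup_sum lookup_summand by simp
qed

lemma expo_le_mexp_Int:
  assumes "expo_le (mexp n A A) \<alpha>" "expo_le (mexp n B B) \<alpha>"
  shows "expo_le (mexp n (A \<inter> B) (A \<inter> B)) \<alpha>"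
  unfolding expo_le_def
proof
  fix v :: "nat \<times> bool"
  obtain i b where v: "v = (i, b)" by (cases v)
  have "Poly_Mapping.lookup (mexp n A A) (i, b) \<le> Poly_Mapping.lookup \<alpha> (i, b)"
    "Poly_Mapping.lookup (mexp n B B) (i, b) \<le> Poly_Mapping.lookup \<alpha> (i, b)"
    using assms unfolding expo_le_def by blast+
  then show "Poly_Mapping.lookup (mexp n (A \<inter> B) (A \<inter> B)) v \<le> Poly_Mapping.lookup \<alpha> v"
    unfolding v lookup_mexp_diag by (auto split: if_splits)
qed

lemma Inter_mem_if_Int_closed:
  assumes "finite F" "F \<noteq> {}" "\<And>A B. A \<in> F \<Longrightarrow> B \<in> F \<Longrightarrow> A \<inter> B \<in> F"
  shows "\<Inter>F \<in> F"
proof -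
  have "G \<subseteq> F \<Longrightarrow> \<Inter>G \<in> F" if "finite G" "G \<noteq> {}" for G
    using that by (induction G rule: finite_ne_induct) (auto simp: assms(3))
  then show ?thesis using assms by blast
qed

definition insert_nth :: "nat \<Rightarrow> 'a \<Rightarrow> 'a list \<Rightarrow> 'a list" where
  "insert_nth j A xs = take j xs @ A # drop j xs"

lemma insert_nth_0 [simp]: "insert_nth 0 A xs = A # xs"
  by (simp add: insert_nth_def)

lemma insert_nth_Suc_Cons [simp]: "insert_nth (Suc j) A (B # xs) = B # insert_nth j A xs"
  by (simp add: insert_nth_def)

lemma nth_insert_nth: "j \<le> length xs \<Longrightarrow> insert_nth j A xs ! j = A"
  by (simp add: insert_nth_def nth_append)

lemma set_insert_nth [simp]: "set (insert_nth j A xs) = insert A (set xs)"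
  by (metis Un_insert_right append_take_drop_id insert_nth_def list.simps(15) set_append)

lemma remove_nth_insert_nth: "j \<le> length xs \<Longrightarrow> remove_nth j (insert_nth j A xs) = xs"
  by (simp add: remove_nth_def insert_nth_def)

lemma insert_nth_remove_nth: "j < length xs \<Longrightarrow> insert_nth j (xs ! j) (remove_nth j xs) = xs"
  by (simp add: remove_nth_def insert_nth_def min_def id_take_nth_drop[symmetric])

lemma set_remove_nth_subset: "set (remove_nth j xs) \<subseteq> set xs"
  unfolding remove_nth_def using set_take_subset set_drop_subset by fastforce

lemma Cons_in_faces_iff:
  "B # \<rho> \<in> faces P (Suc k) \<longleftrightarrow> B \<in> P \<and> \<rho> \<in> faces P k \<and> (\<forall>C\<in>set \<rho>. B \<subset> C)"
  by (auto simp: faces_def)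

lemma Nil_in_faces_iff [simp]: "[] \<in> faces P k \<longleftrightarrow> k = 0"
  by (auto simp: faces_def)

lemma faces_Suc_obtain_Cons:
  assumes "\<sigma> \<in> faces P (Suc k)"
  obtains B \<rho> where "\<sigma> = B # \<rho>" "B \<in> P" "\<rho> \<in> faces P k" "\<forall>C\<in>set \<rho>. B \<subset> C"
  using assms by (cases \<sigma>) (auto simp: Cons_in_faces_iff)

lemma faces_one: "faces P (Suc 0) = (\<lambda>A. [A]) ` P"
  by (auto simp: faces_def length_Suc_conv)

lemma finite_faces: "finite P \<Longrightarrow> finite (faces P d)"
  by (rule finite_subset[of _ "{xs. set xs \<subseteq> P \<and> length xs = d}"])
     (auto simp: faces_def intro: finite_lists_length_eq)

lemma insert_nth_least_notin_faces:
  assumes "\<forall>C\<in>set xs. M \<subset> C" "0 < j" "j \<le> length xs"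
  shows "insert_nth j M xs \<notin> faces P (Suc k)"
proof (cases xs)
  case (Cons B ys)
  obtain j' where "j = Suc j'" using \<open>0 < j\<close> by (cases j) auto
  then show ?thesis using assms Cons by (auto simp: Cons_in_faces_iff)
qed (use assms in simp)

definition simplicial_bdry ::
    "nat set set \<Rightarrow> nat \<Rightarrow> (nat set list \<Rightarrow> 'k::comm_ring_1) \<Rightarrow> nat set list \<Rightarrow> 'k" where
  "simplicial_bdry P d x \<tau> =
     (\<Sum>\<sigma>\<in>faces P (Suc d). \<Sum>j<Suc d. if remove_nth j \<sigma> = \<tau> then (-1) ^ j * x \<sigma> else 0)"

lemma simplicial_bdry_zero [simp]: "simplicial_bdry P d (\<lambda>_. 0) \<tau> = 0"
  unfolding simplicial_bdry_def by (intro sum.neutral ballI) simp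

lemma simplicial_bdry_insert_nth:
  fixes x :: "nat set list \<Rightarrow> 'k::comm_ring_1"
  assumes fin: "finite P" and len: "length \<tau> = d"
    and supp: "\<And>\<sigma>. x \<sigma> \<noteq> 0 \<Longrightarrow> \<sigma> \<in> faces P (Suc d)"
  shows "simplicial_bdry P d x \<tau> = (\<Sum>j<Suc d. \<Sum>A\<in>P. (-1) ^ j * x (insert_nth j A \<tau>))"
proof -
  have "(\<Sum>\<sigma>\<in>faces P (Suc d). if remove_nth j \<sigma> = \<tau> then (-1) ^ j * x \<sigma> else 0)
      = (\<Sum>A\<in>P. (-1) ^ j * x (insert_nth j A \<tau>))" if j: "j \<le> length \<tau>" for j
  proof -
    let ?S = "{\<sigma>\<in>faces P (Suc d). remove_nth j \<sigma> = \<tau>}"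
    let ?P = "{A\<in>P. insert_nth j A \<tau> \<in> faces P (Suc d)}"
    have S_eq: "?S = (\<lambda>A. insert_nth j A \<tau>) ` ?P"
    proof (intro equalityI subsetI)
      fix \<sigma> assume \<sigma>: "\<sigma> \<in> ?S"
      then have "j < length \<sigma>" using j len by (auto simp: faces_def)
      then have "\<sigma> = insert_nth j (\<sigma> ! j) \<tau>" "\<sigma> ! j \<in> P"
        using insert_nth_remove_nth[of j \<sigma>] \<sigma> by (auto simp: faces_def)
      then show "\<sigma> \<in> (\<lambda>A. insert_nth j A \<tau>) ` ?P" using \<sigma> by auto
    qed (use remove_nth_insert_nth[OF j] in auto)
    have "(\<Sum>\<sigma>\<in>faces P (Suc d). if remove_nth j \<sigma> = \<tau> then (-1) ^ j * x \<sigma> else 0)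
        = (\<Sum>\<sigma>\<in>?S. (-1) ^ j * x \<sigma>)"
      by (rule sum.inter_filter[symmetric]) (simp add: finite_faces fin)
    also have "\<dots> = (\<Sum>A\<in>?P. (-1) ^ j * x (insert_nth j A \<tau>))"
    proof -
      have "inj_on (\<lambda>A. insert_nth j A \<tau>) ?P"
        by (rule inj_onI) (metis nth_insert_nth[OF j])
      then show ?thesis unfolding S_eq by (simp add: sum.reindex)
    qed
    also have "\<dots> = (\<Sum>A\<in>P. (-1) ^ j * x (insert_nth j A \<tau>))"
    proof (rule sum.mono_neutral_left)
      show "\<forall>A\<in>P - ?P. (-1) ^ j * x (insert_nth j A \<tau>) = 0"
        by (metis (mono_tags) Diff_iff mem_Collect_eq mult_zero_right supp)
    qed (use fin in auto)
    finally show ?thesis .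
  qed
  then show ?thesis
    unfolding simplicial_bdry_def using len by (subst sum.swap) (auto intro: sum.cong)
qed

lemma sum_insert_nth_Cons:
  fixes f :: "nat set list \<Rightarrow> 'k::comm_ring_1"
  shows "(\<Sum>j<Suc (Suc d). \<Sum>A\<in>P. (-1) ^ j * f (insert_nth j A (T # \<rho>)))
       = (\<Sum>A\<in>P. f (A # T # \<rho>)) - (\<Sum>j<Suc d. \<Sum>A\<in>P. (-1) ^ j * f (T # insert_nth j A \<rho>))"
proof -
  have "(\<Sum>A\<in>P. (-1) ^ Suc j * f (insert_nth (Suc j) A (T # \<rho>)))
      = - (\<Sum>A\<in>P. (-1) ^ j * f (T # insert_nth j A \<rho>))" for j
    by (simp only: insert_nth_Suc_Cons power_Suc mult_minus1 mult_minus_left mult_1 sum_negf)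
  then show ?thesis
    by (subst sum.lessThan_Suc_shift) (simp only: insert_nth_0 power_0 mult_1 sum_negf diff_conv_add_uminus)
qed

definition cone :: "nat set \<Rightarrow> (nat set list \<Rightarrow> 'k) \<Rightarrow> nat set list \<Rightarrow> 'k::zero" where
  "cone M x \<sigma> = (case \<sigma> of [] \<Rightarrow> 0 | B # \<rho> \<Rightarrow> if B = M \<and> M \<notin> set \<rho> then x \<rho> else 0)"

lemma cone_Nil [simp]: "cone M x [] = 0"
  and cone_Cons [simp]: "cone M x (B # \<rho>) = (if B = M \<and> M \<notin> set \<rho> then x \<rho> else 0)"
  by (simp_all add: cone_def)

lemma cone_support:
  assumes "cone M x \<sigma> \<noteq> 0" and "M \<in> P"
    and supp: "\<And>\<rho>. x \<rho> \<noteq> 0 \<Longrightarrow> \<rho> \<in> faces P d"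
    and below: "\<And>\<rho> A. x \<rho> \<noteq> 0 \<Longrightarrow> A \<in> set \<rho> \<Longrightarrow> M \<subseteq> A"
  shows "\<exists>\<rho>. \<sigma> = M # \<rho> \<and> x \<rho> \<noteq> 0 \<and> \<sigma> \<in> faces P (Suc d)"
proof (cases \<sigma>)
  case (Cons B \<rho>)
  then have "B = M" "M \<notin> set \<rho>" "x \<rho> \<noteq> 0" using assms(1) by (auto split: if_splits)
  moreover from this have "\<forall>C\<in>set \<rho>. M \<subset> C" using below by blast
  ultimately show ?thesis using Cons \<open>M \<in> P\<close> supp by (auto simp: Cons_in_faces_iff)
qed (use assms(1) in simp)

lemma simplicial_bdry_cone:
  fixes x :: "nat set list \<Rightarrow> 'k::comm_ring_1"
  assumes fin: "finite P" and MP: "M \<in> P"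
    and supp: "\<And>\<sigma>. x \<sigma> \<noteq> 0 \<Longrightarrow> \<sigma> \<in> faces P (Suc d)"
    and below: "\<And>\<sigma> A. x \<sigma> \<noteq> 0 \<Longrightarrow> A \<in> set \<sigma> \<Longrightarrow> M \<subseteq> A"
    and cycle: "\<And>\<tau>. \<tau> \<in> faces P d \<Longrightarrow> simplicial_bdry P d x \<tau> = 0"
    and \<tau>: "\<tau> \<in> faces P (Suc d)"
  shows "simplicial_bdry P (Suc d) (cone M x) \<tau> = x \<tau>"
proof -
  obtain T \<rho> where \<tau>_eq: "\<tau> = T # \<rho>" and \<rho>: "\<rho> \<in> faces P d" and T_less: "\<forall>C\<in>set \<rho>. T \<subset> C"
    using \<tau> by (rule faces_Suc_obtain_Cons)
  have len: "length \<rho> = d" using \<rho> by (simp add: faces_def)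
  have cone_supp: "\<sigma> \<in> faces P (Suc (Suc d))" if "cone M x \<sigma> \<noteq> 0" for \<sigma>
    using cone_support[of M x \<sigma> P "Suc d"] that MP supp below by blast
  have "simplicial_bdry P (Suc d) (cone M x) \<tau>
      = (\<Sum>j<Suc (Suc d). \<Sum>A\<in>P. (-1) ^ j * cone M x (insert_nth j A \<tau>))"
    by (rule simplicial_bdry_insert_nth) (use fin \<tau> cone_supp in \<open>auto simp: faces_def\<close>)
  also have "\<dots> = (\<Sum>A\<in>P. cone M x (A # \<tau>))
      - (\<Sum>j<Suc d. \<Sum>A\<in>P. (-1) ^ j * cone M x (T # insert_nth j A \<rho>))"
    unfolding \<tau>_eq by (rule sum_insert_nth_Cons)
  also have "\<dots> = x \<tau>"
  proof (cases "T = M")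
    case False
    have "x \<tau> = 0" if "M \<in> set \<tau>"
      using below[of \<tau> T] below[of \<tau> M] that T_less False \<tau>_eq by fastforce
    then show ?thesis using False fin MP by (cases "M \<in> set \<tau>") simp_all
  next
    case True
    have M_notin: "M \<notin> set \<rho>" using T_less True by blast
    have "(\<Sum>j<Suc d. \<Sum>A\<in>P. (-1) ^ j * cone M x (T # insert_nth j A \<rho>))
        = (\<Sum>j<Suc d. \<Sum>A\<in>P. (-1) ^ j * x (insert_nth j A \<rho>))
          - (\<Sum>j<Suc d. (-1) ^ j * x (insert_nth j M \<rho>))"
    proof -
      have "(\<Sum>A\<in>P. (-1) ^ j * cone M x (T # insert_nth j A \<rho>))
          = (\<Sum>A\<in>P - {M}. (-1) ^ j * x (insert_nth j A \<rho>))" for j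
        using fin True M_notin by (intro sum.mono_neutral_cong_right) auto
      then show ?thesis using fin MP by (simp add: sum_diff1 sum_subtractf)
    qed
    also have "\<dots> = - x \<tau>"
    proof -
      have "x (insert_nth j M \<rho>) = 0" if "0 < j" "j < Suc d" for j
        using insert_nth_least_notin_faces[of \<rho> M j P d] that T_less True len supp by fastforce
      then have "(\<Sum>j<Suc d. (-1) ^ j * x (insert_nth j M \<rho>)) = x \<tau>"
        using True \<tau>_eq by (subst sum.lessThan_Suc_shift) simp
      moreover have "simplicial_bdry P d x \<rho> = (\<Sum>j<Suc d. \<Sum>A\<in>P. (-1) ^ j * x (insert_nth j A \<rho>))"
        by (rule simplicial_bdry_insert_nth) (use fin len supp in auto)
      ultimately show ?thesis using cycle[OF \<rho>] by simp
    qed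
    finally show ?thesis using True M_notin \<tau>_eq by simp
  qed
  finally show ?thesis .
qed

text \<open>The component of a chain \<open>c\<close> in multidegree \<open>\<alpha>\<close>: since \<open>e\<^sub>\<sigma>\<close> has multidegree
  \<open>m\<^sub>\<sigma>\<close>, its coefficient is the coefficient of \<open>x\<^sup>\<alpha>\<close> in \<open>x\<^bsup>m\<^sub>\<sigma>\<^esup> c\<^sub>\<sigma>\<close>.\<close>
definition strand :: "nat \<Rightarrow> expo \<Rightarrow> (nat set list \<Rightarrow> 'k::field polyS) \<Rightarrow> nat set list \<Rightarrow> 'k" where
  "strand n \<alpha> c \<sigma> = Poly_Mapping.lookup (mono (face_label n \<sigma>) * c \<sigma>) \<alpha>"

lemma strand_zero [simp]: "strand n \<alpha> (\<lambda>_. 0) \<sigma> = 0"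
  by (simp add: strand_def)

lemma lookup_eq_strand: "Poly_Mapping.lookup (c \<tau>) u = strand n (u + face_label n \<tau>) c \<tau>"
  by (simp add: strand_def lookup_mono_mult)

lemma eq_if_strands_eq:
  assumes "\<And>\<alpha>. strand n \<alpha> b \<sigma> = strand n \<alpha> c \<sigma>"
  shows "b \<sigma> = c \<sigma>"
proof (rule poly_mapping_eqI)
  show "Poly_Mapping.lookup (b \<sigma>) u = Poly_Mapping.lookup (c \<sigma>) u" for u
    using lookup_eq_strand[of b \<sigma> u n] lookup_eq_strand[of c \<sigma> u n] assms by simp
qed

lemma finite_strand_support: "finite {\<alpha>. strand n \<alpha> c \<sigma> \<noteq> 0}"
  by (simp add: strand_def flip: in_keys_iff)

lemma strand_nonzeroD:
  assumes "strand n \<alpha> c \<sigma> \<noteq> 0"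
  shows "c \<sigma> \<noteq> 0" "expo_le (face_label n \<sigma>) \<alpha>"
  using assms by (auto simp: strand_def lookup_mono_mult split: if_splits)

lemma strand_bdry:
  assumes "\<tau> \<in> faces P d"
  shows "strand n \<alpha> (bdry P n d c) \<tau> = simplicial_bdry P d (strand n \<alpha> c) \<tau>"
proof -
  have summand: "mono (face_label n \<tau>) * ((-1) ^ j * mono (face_label n \<sigma> - face_label n \<tau>) * c \<sigma>)
      = (-1) ^ j * (mono (face_label n \<sigma>) * c \<sigma>)" if "remove_nth j \<sigma> = \<tau>" for \<sigma> j
  proof -
    have "expo_le (face_label n \<tau>) (face_label n \<sigma>)"
      using face_label_mono[OF set_remove_nth_subset] that by blast
    then have mono_eq: "mono (face_label n \<tau>) * mono (face_label n \<sigma> - face_label n \<tau>)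
        = (mono (face_label n \<sigma>) :: 'a polyS)"
      by (simp add: mono_mult_mono expo_le_diff_add add.commute[of "face_label n \<tau>"])
    have "mono (face_label n \<tau>) * ((-1) ^ j * mono (face_label n \<sigma> - face_label n \<tau>) * c \<sigma>)
        = (-1) ^ j * (mono (face_label n \<tau>) * mono (face_label n \<sigma> - face_label n \<tau>) * c \<sigma>)"
      by (simp only: ac_simps)
    then show ?thesis unfolding mono_eq .
  qed
  have "mono (face_label n \<tau>) * bdry P n d c \<tau> = (\<Sum>\<sigma>\<in>faces P (Suc d). \<Sum>j<Suc d.
      if remove_nth j \<sigma> = \<tau> then (-1) ^ j * (mono (face_label n \<sigma>) * c \<sigma>) else 0)"
    unfolding bdry_def if_P[OF assms] sum_distrib_left
    by (intro sum.cong refl) (simp add: summand)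
  then show ?thesis
    unfolding strand_def simplicial_bdry_def
    by (simp add: lookup_sum if_distrib[of "\<lambda>p. Poly_Mapping.lookup p \<alpha>"] lookup_neg_one_power_mult
        del: sum.lessThan_Suc cong: if_cong)
qed

lemma obtain_chain_with_strands:
  fixes y :: "expo \<Rightarrow> nat set list \<Rightarrow> 'k::field"
  assumes le: "\<And>\<alpha> \<sigma>. y \<alpha> \<sigma> \<noteq> 0 \<Longrightarrow> expo_le (face_label n \<sigma>) \<alpha>"
    and fin: "\<And>\<sigma>. finite {\<alpha>. y \<alpha> \<sigma> \<noteq> 0}"
  obtains b :: "nat set list \<Rightarrow> 'k polyS" where "\<And>\<alpha>. strand n \<alpha> b = y \<alpha>"
proof -
  define b :: "nat set list \<Rightarrow> 'k polyS"
    where "b \<sigma> = Abs_poly_mapping (\<lambda>u. y (u + face_label n \<sigma>) \<sigma>)" for \<sigma>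
  have "finite {u. y (u + face_label n \<sigma>) \<sigma> \<noteq> 0}" for \<sigma>
    using finite_vimageI[OF fin[of \<sigma>], of "\<lambda>u. u + face_label n \<sigma>"] by (simp add: inj_def vimage_def)
  then have lookup_b: "Poly_Mapping.lookup (b \<sigma>) u = y (u + face_label n \<sigma>) \<sigma>" for \<sigma> u
    by (simp add: b_def)
  have "strand n \<alpha> b = y \<alpha>" for \<alpha>
    using le[of \<alpha>] by (auto simp: fun_eq_iff strand_def lookup_mono_mult lookup_b expo_le_diff_add)
  then show thesis by (rule that)
qed

lemma strand_cycle_is_boundary:
  fixes c :: "nat set list \<Rightarrow> 'k::field polyS"
  assumes fin: "finite P" and Int_closed: "\<And>A B. A \<in> P \<Longrightarrow> B \<in> P \<Longrightarrow> A \<inter> B \<in> P"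
    and c: "c \<in> chains P (Suc d)" and cycle: "bdry P n d c = (\<lambda>_. 0)"
  shows "\<exists>y. (\<forall>\<sigma>. y \<sigma> \<noteq> 0 \<longrightarrow>
          \<sigma> \<in> faces P (Suc (Suc d)) \<and> expo_le (face_label n \<sigma>) \<alpha> \<and> strand n \<alpha> c (tl \<sigma>) \<noteq> 0)
      \<and> (\<forall>\<tau>\<in>faces P (Suc d). simplicial_bdry P (Suc d) y \<tau> = strand n \<alpha> c \<tau>)"
proof -
  define Q where "Q = {A \<in> P. expo_le (mexp n A A) \<alpha>}"
  have supp: "\<sigma> \<in> faces P (Suc d)" and in_Q: "set \<sigma> \<subseteq> Q" if "strand n \<alpha> c \<sigma> \<noteq> 0" for \<sigma>
  proof -
    show face: "\<sigma> \<in> faces P (Suc d)"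
      using c strand_nonzeroD(1)[OF that] by (auto simp: chains_def)
    show "set \<sigma> \<subseteq> Q"
      using strand_nonzeroD(2)[OF that] face by (auto simp: Q_def faces_def expo_le_face_label_iff)
  qed
  have strand_cycle: "simplicial_bdry P d (strand n \<alpha> c) \<tau> = 0" if "\<tau> \<in> faces P d" for \<tau>
    using strand_bdry[OF that, of n \<alpha> c] cycle by simp
  show ?thesis
  proof (cases "Q = {}")
    case True
    then have "strand n \<alpha> c \<sigma> = 0" for \<sigma>
      using supp in_Q by (metis faces_Suc_obtain_Cons list.set_intros(1) subset_empty empty_iff)
    then show ?thesis by (intro exI[of _ "\<lambda>_. 0"]) simp
  next
    case False
    define M where "M = \<Inter>Q"
    have "finite Q" using fin by (simp add: Q_def)
    then have M_Q: "M \<in> Q"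
      unfolding M_def using False Int_closed expo_le_mexp_Int
      by (intro Inter_mem_if_Int_closed) (auto simp: Q_def)
    then have M_P: "M \<in> P" by (simp add: Q_def)
    have below: "M \<subseteq> A" if "strand n \<alpha> c \<sigma> \<noteq> 0" "A \<in> set \<sigma>" for \<sigma> A
      using in_Q that by (auto simp: M_def)
    show ?thesis
    proof (rule exI[of _ "cone M (strand n \<alpha> c)"], rule conjI; intro allI impI ballI)
      fix \<sigma> assume "cone M (strand n \<alpha> c) \<sigma> \<noteq> 0"
      then obtain \<rho> where \<sigma>: "\<sigma> = M # \<rho>" "strand n \<alpha> c \<rho> \<noteq> 0" "\<sigma> \<in> faces P (Suc (Suc d))"
        using cone_support[of M "strand n \<alpha> c" \<sigma> P "Suc d"] M_P supp below by blast
      then have "set \<sigma> \<subseteq> Q" using in_Q M_Q by auto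
      then show "\<sigma> \<in> faces P (Suc (Suc d)) \<and> expo_le (face_label n \<sigma>) \<alpha> \<and> strand n \<alpha> c (tl \<sigma>) \<noteq> 0"
        using \<sigma> by (auto simp: Q_def expo_le_face_label_iff)
    next
      fix \<tau> assume "\<tau> \<in> faces P (Suc d)"
      then show "simplicial_bdry P (Suc d) (cone M (strand n \<alpha> c)) \<tau> = strand n \<alpha> c \<tau>"
        using simplicial_bdry_cone[of P M "strand n \<alpha> c" d \<tau>] fin M_P supp below strand_cycle by blast
    qed
  qed
qed

lemma bdry_exact:
  fixes c :: "nat set list \<Rightarrow> 'k::field polyS"
  assumes fin: "finite P" and Int_closed: "\<And>A B. A \<in> P \<Longrightarrow> B \<in> P \<Longrightarrow> A \<inter> B \<in> P"
    and c: "c \<in> chains P (Suc d)" and cycle: "bdry P n d c = (\<lambda>_. 0)"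
  shows "\<exists>b \<in> chains P (Suc (Suc d)). bdry P n (Suc d) b = c"
proof -
  obtain y where
    supp: "\<And>\<alpha> \<sigma>. y \<alpha> \<sigma> \<noteq> 0 \<Longrightarrow>
       \<sigma> \<in> faces P (Suc (Suc d)) \<and> expo_le (face_label n \<sigma>) \<alpha> \<and> strand n \<alpha> c (tl \<sigma>) \<noteq> 0"
    and fill: "\<And>\<alpha> \<tau>. \<tau> \<in> faces P (Suc d) \<Longrightarrow> simplicial_bdry P (Suc d) (y \<alpha>) \<tau> = strand n \<alpha> c \<tau>"
    using strand_cycle_is_boundary[OF fin Int_closed c cycle] by metis
  have "finite {\<alpha>. y \<alpha> \<sigma> \<noteq> 0}" for \<sigma>
    using finite_strand_support[of n c "tl \<sigma>"] by (rule finite_subset[rotated]) (auto dest: supp)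
  then obtain b :: "nat set list \<Rightarrow> 'k polyS" where b: "\<And>\<alpha>. strand n \<alpha> b = y \<alpha>"
    using supp by (metis obtain_chain_with_strands)
  have "b \<in> chains P (Suc (Suc d))"
    unfolding chains_def using eq_if_strands_eq[of n b _ "\<lambda>_. 0"] b supp by auto
  moreover have "bdry P n (Suc d) b \<tau> = c \<tau>" for \<tau>
  proof (cases "\<tau> \<in> faces P (Suc d)")
    case True
    show ?thesis by (rule eq_if_strands_eq[where n = n]) (simp add: strand_bdry[OF True] b fill True)
  next
    case False
    then show ?thesis using c by (simp add: bdry_def chains_def)
  qed
  ultimately show ?thesis by blast
qed

lemma bdry_augmentation: "bdry P n 0 c [] = (\<Sum>A\<in>P. c [A] * mm n A A)"
proof -
  have "bdry P n 0 c [] = (\<Sum>\<sigma>\<in>faces P (Suc 0). mono (face_label n \<sigma>) * c \<sigma>)"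
    by (auto simp: bdry_def faces_one remove_nth_def intro!: sum.cong)
  also have "\<dots> = (\<Sum>A\<in>P. c [A] * mm n A A)"
    unfolding faces_one by (simp add: sum.reindex inj_on_def mm_def mult.commute)
  finally show ?thesis .
qed

lemma augmentation_image_eq_Istar:
  "(\<lambda>c. bdry P n 0 c []) ` (chains P 1 :: (nat set list \<Rightarrow> 'k::field polyS) set) = Istar n P"
proof (intro equalityI subsetI)
  fix z :: "'k polyS"
  assume "z \<in> (\<lambda>c. bdry P n 0 c []) ` chains P 1"
  then show "z \<in> Istar n P" by (auto simp: Istar_def bdry_augmentation)
next
  fix z :: "'k polyS"
  assume "z \<in> Istar n P"
  then obtain r where z: "z = (\<Sum>A\<in>P. r A * mm n A A)" by (auto simp: Istar_def)
  define c :: "nat set list \<Rightarrow> 'k polyS" where "c \<sigma> = (if \<sigma> \<in> faces P 1 then r (hd \<sigma>) else 0)" for \<sigma>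
  have "c \<in> chains P 1" by (simp add: chains_def c_def)
  moreover have "bdry P n 0 c [] = z"
    unfolding bdry_augmentation z by (intro sum.cong refl) (simp add: c_def faces_one)
  ultimately show "z \<in> (\<lambda>c. bdry P n 0 c []) ` chains P 1" by force
qed

theorem mainTheorem4:
  fixes P :: "nat set set" and n :: nat
  assumes "P \<subseteq> Pow {..<n}"
    and "P \<noteq> {}"
    and "\<And>A B. A \<in> P \<Longrightarrow> B \<in> P \<Longrightarrow> A \<inter> B \<in> P"
  shows "(\<forall>d\<ge>1. \<forall>c \<in> chains P d. bdry P n (d - 1) c = (\<lambda>_. 0) \<longrightarrow>
            (\<exists>b \<in> chains P (Suc d). (bdry P n d b :: nat set list \<Rightarrow> 'k::field polyS) = c))
      \<and> (\<lambda>c. bdry P n 0 c []) ` (chains P 1 :: (nat set list \<Rightarrow> 'k polyS) set) = Istar n P"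
proof (intro conjI allI impI ballI)
  fix d and c :: "nat set list \<Rightarrow> 'k polyS"
  assume "d \<ge> 1" and "c \<in> chains P d" and "bdry P n (d - 1) c = (\<lambda>_. 0)"
  moreover have "finite P" using assms(1) by (rule finite_subset) simp
  ultimately show "\<exists>b \<in> chains P (Suc d). bdry P n d b = c"
    using bdry_exact[of P c "d - 1" n] assms(3) by simp
qed (rule augmentation_image_eq_Istar)

end
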